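(* For any compact interval $\mathcal I\subset\mathbb R$ and any continuous piecewise linear function $f^*:\mathcal I\rightarrow\mathbb{R}$ with $P$ linear pieces ($P\in\mathbb N$), there exists a $\textsc{ReLU}$ network $f$ of width $2$ such that $f(x)=f^*(x)$ for all $x\in\mathcal I$.
   Context: A $\textsc{ReLU}$ network $f:\mathbb R\to\mathbb R$ is $t_L\circ\sigma_{L-1}\circ\cdots\circ\sigma_1\circ t_1$ with affine $t_\ell:\mathbb R^{d_{\ell-1}}\to\mathbb R^{d_\ell}$ ($d_0=d_L=1$) and coordinatewise $\textsc{ReLU}$ $\sigma_\ell$; its width is $\max\{d_1,\dots,d_{L-1}\}$. *)

theory Defs
  imports "HOL-Analysis.Analysis"
begin

text \<open>Vectors in R^d are represented as functions nat => real, of which only the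
  coordinates i < d are meaningful.\<close>

type_synonym layer = "(nat \<Rightarrow> nat \<Rightarrow> real) \<times> (nat \<Rightarrow> real)"

definition affine_map :: "layer \<Rightarrow> nat \<Rightarrow> (nat \<Rightarrow> real) \<Rightarrow> (nat \<Rightarrow> real)" where
  "affine_map t din x = (\<lambda>i. (\<Sum>j<din. fst t i j * x j) + snd t i)"

definition relu_vec :: "(nat \<Rightarrow> real) \<Rightarrow> (nat \<Rightarrow> real)" where
  "relu_vec v = (\<lambda>i. max 0 (v i))"

text \<open>net_eval ts ds x computes t_L o sigma o ... o sigma o t_1 applied to x, where
  ds lists the input dimensions d_0, ..., d_(L-1) of the layers t_1, ..., t_L.\<close>
fun net_eval :: "layer list \<Rightarrow> nat list \<Rightarrow> (nat \<Rightarrow> real) \<Rightarrow> (nat \<Rightarrow> real)" where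
  "net_eval [] ds x = x"
| "net_eval [t] ds x = affine_map t (hd ds) x"
| "net_eval (t # ts) ds x = net_eval ts (tl ds) (relu_vec (affine_map t (hd ds) x))"

definition relu_net :: "layer list \<Rightarrow> nat list \<Rightarrow> bool" where
  "relu_net ts ds \<longleftrightarrow> ts \<noteq> [] \<and> length ds = length ts + 1 \<and>
     hd ds = 1 \<and> last ds = 1 \<and> (\<forall>i<length ds. ds ! i \<ge> 1)"

definition net_fun :: "layer list \<Rightarrow> nat list \<Rightarrow> real \<Rightarrow> real" where
  "net_fun ts ds x = net_eval ts ds (\<lambda>_. x) 0"

definition net_width :: "nat list \<Rightarrow> nat" where
  "net_width ds = foldr max (butlast (tl ds)) 0"

definition cpwl_pieces :: "(real \<Rightarrow> real) \<Rightarrow> real \<Rightarrow> real \<Rightarrow> nat \<Rightarrow> bool" where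
  "cpwl_pieces f a b P \<longleftrightarrow> P \<ge> 1 \<and> continuous_on {a..b} f \<and>
     (\<exists>p :: nat \<Rightarrow> real. p 0 = a \<and> p P = b \<and> (\<forall>i<P. p i < p (Suc i)) \<and>
        (\<forall>i<P. \<exists>m c. \<forall>x\<in>{p i..p (Suc i)}. f x = m * x + c))"

end

theory Submission
  imports Defs
begin

text \<open>Let a = p_0 < ... < p_P = b be the breakpoints of f and choose B with f + B \<ge> 0
  on [a, b]. The two hidden neurons carry the pair (max 0 (x - p_k), f (min x p_k) + B); both
  entries are nonnegative, so the ReLU leaves them untouched. If f has slope m on
  [p_k, p_(k+1)], then
  f (min x p_(k+1)) = f (min x p_k) + m (max 0 (x - p_k) - max 0 (x - p_(k+1))),
  so two layers advance the pair from p_k to p_(k+1): the first forms max 0 (x - p_(k+1))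
  through its ReLU while holding f (min x p_k) + B + m max 0 (x - p_k) + K, where the offset
  K = |m| (b - a) keeps this nonnegative; the second subtracts m max 0 (x - p_(k+1)) and K.
  At k = P the second entry is f x + B.\<close>

definition vec2 :: "real \<Rightarrow> real \<Rightarrow> nat \<Rightarrow> real" where
  "vec2 u v = (\<lambda>i. if i = 0 then u else if i = 1 then v else 0)"

text \<open>The simplifier rewrites the numeral 1 :: nat to Suc 0 (One_nat_def).\<close>
lemma vec2_nth [simp]: "vec2 u v 0 = u" "vec2 u v (Suc 0) = v"
  by (simp_all add: vec2_def)

lemma relu_vec_vec2: "relu_vec (vec2 u v) = vec2 (max 0 u) (max 0 v)"
  by (simp add: relu_vec_def vec2_def fun_eq_iff)

definition layer2 :: "real \<Rightarrow> real \<Rightarrow> real \<Rightarrow> real \<Rightarrow> real \<Rightarrow> real \<Rightarrow> layer" where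
  "layer2 w00 w01 w10 w11 c0 c1 =
     ((\<lambda>i j. if i = 0 then (if j = 0 then w00 else w01)
             else if i = 1 then (if j = 0 then w10 else w11) else 0),
      vec2 c0 c1)"

lemma affine_map_layer2:
  "affine_map (layer2 w00 w01 w10 w11 c0 c1) 2 v =
     vec2 (w00 * v 0 + w01 * v 1 + c0) (w10 * v 0 + w11 * v 1 + c1)"
  by (simp add: affine_map_def layer2_def vec2_def numeral_2_eq_2 fun_eq_iff)

lemma affine_map_layer2_input:
  "affine_map (layer2 w00 w01 w10 w11 c0 c1) 1 v = vec2 (w00 * v 0 + c0) (w10 * v 0 + c1)"
  by (simp add: affine_map_def layer2_def vec2_def fun_eq_iff)

definition hidden_layer :: "layer \<Rightarrow> (nat \<Rightarrow> real) \<Rightarrow> nat \<Rightarrow> real" where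
  "hidden_layer t v = relu_vec (affine_map t 2 v)"

lemma net_eval_Cons:
  "ts \<noteq> [] \<Longrightarrow> net_eval (t # ts) ds v = net_eval ts (tl ds) (relu_vec (affine_map t (hd ds) v))"
  by (cases ts) simp_all

lemma net_eval_hidden_layers:
  "net_eval (ts @ [tL]) (replicate (Suc (length ts)) 2 @ [1]) v =
     affine_map tL 2 (fold hidden_layer ts v)"
  by (induction ts arbitrary: v) (simp_all add: net_eval_Cons hidden_layer_def)

lemma net_fun_width2:
  "net_fun (t1 # ts @ [tL]) (1 # replicate (Suc (length ts)) 2 @ [1]) x =
     affine_map tL 2 (fold hidden_layer ts (relu_vec (affine_map t1 1 (\<lambda>_. x)))) 0"
  unfolding net_fun_def
  by (subst net_eval_Cons) (simp_all only: list.sel net_eval_hidden_layers append_Cons, simp_all)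

lemma relu_net_width2: "relu_net (t1 # ts @ [tL]) (1 # replicate (Suc (length ts)) 2 @ [1])"
  by (auto simp: relu_net_def nth_append nth_Cons split: nat.splits)

lemma net_width_width2: "net_width (1 # replicate (Suc n) 2 @ [1]) = 2"
proof -
  have "foldr max (replicate (Suc n) 2) 0 = (2::nat)"
    by (induction n) auto
  then show ?thesis
    by (simp add: net_width_def butlast_append del: replicate_Suc)
qed

definition clamped_state :: "(real \<Rightarrow> real) \<Rightarrow> real \<Rightarrow> real \<Rightarrow> real \<Rightarrow> nat \<Rightarrow> real" where
  "clamped_state f B q x = vec2 (max 0 (x - q)) (f (min x q) + B)"

lemma clamped_state_input:
  assumes "a \<le> x" "0 \<le> f a + B"
  shows "relu_vec (affine_map (layer2 1 0 0 0 (- a) (f a + B)) 1 (\<lambda>_. x)) = clamped_state f B a x"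
  unfolding affine_map_layer2_input using assms by (simp add: clamped_state_def relu_vec_vec2)

lemma clamped_state_output:
  "x \<le> b \<Longrightarrow> affine_map (layer2 0 1 0 0 (- B) 0) 2 (clamped_state f B b x) 0 = f x"
  by (simp add: affine_map_layer2 clamped_state_def)

lemma affine_on_min_increment:
  fixes f :: "real \<Rightarrow> real"
  assumes affine: "\<forall>y\<in>{q..q'}. f y = m * y + c" and "q \<le> q'"
  shows "f (min x q') = f (min x q) + m * (max 0 (x - q) - max 0 (x - q'))"
proof -
  have fq: "f q = m * q + c" using affine \<open>q \<le> q'\<close> by simp
  consider "x \<le> q" | "q < x" "x \<le> q'" | "q' < x" by linarith
  then show ?thesis
  proof cases
    case 1
    then show ?thesis using \<open>q \<le> q'\<close> by simp
  next
    case 2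
    then have "f x = m * x + c" using affine by simp
    then show ?thesis using 2 fq by (simp add: right_diff_distrib)
  next
    case 3
    have "f q' = m * q' + c" using affine \<open>q \<le> q'\<close> by simp
    then show ?thesis using 3 fq \<open>q \<le> q'\<close> by (simp add: right_diff_distrib)
  qed
qed

lemma clamped_state_step:
  fixes f :: "real \<Rightarrow> real"
  assumes affine: "\<forall>y\<in>{q..q'}. f y = m * y + c" and "q \<le> q'"
    and nonneg: "0 \<le> f (min x q) + B" "0 \<le> f (min x q') + B"
    and offset: "\<bar>m\<bar> * max 0 (x - q) \<le> K"
  shows "hidden_layer (layer2 1 0 (- m) 1 0 (- K))
           (hidden_layer (layer2 1 0 m 1 (q - q') K) (clamped_state f B q x)) =
         clamped_state f B q' x"
proof -
  define z where "z = max 0 (x - q)"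
  define z' where "z' = max 0 (x - q')"
  define v where "v = f (min x q) + B"
  define v' where "v' = f (min x q') + B"
  have "\<bar>m * z\<bar> = \<bar>m\<bar> * z"
    unfolding z_def by (simp add: abs_mult)
  then have mid_nonneg: "0 \<le> m * z + v + K"
    using abs_ge_minus_self[of "m * z"] nonneg(1) offset unfolding z_def v_def by linarith
  have "max 0 (z + (q - q')) = z'"
    unfolding z_def z'_def using \<open>q \<le> q'\<close> by linarith
  then have first: "hidden_layer (layer2 1 0 m 1 (q - q') K) (vec2 z v) = vec2 z' (m * z + v + K)"
    using mid_nonneg by (simp add: hidden_layer_def affine_map_layer2 relu_vec_vec2)
  have "v' = v + m * (z - z')"
    unfolding z_def z'_def v_def v'_def using affine_on_min_increment[OF affine \<open>q \<le> q'\<close>]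
    by simp
  then have "- m * z' + (m * z + v + K) + - K = v'"
    by (simp add: right_diff_distrib)
  moreover have "0 \<le> z'" "0 \<le> v'"
    unfolding z'_def v'_def using nonneg(2) by simp_all
  ultimately have "hidden_layer (layer2 1 0 (- m) 1 0 (- K)) (vec2 z' (m * z + v + K)) = vec2 z' v'"
    by (simp add: hidden_layer_def affine_map_layer2 relu_vec_vec2)
  then show ?thesis
    using first by (simp add: clamped_state_def flip: z_def z'_def v_def v'_def)
qed

lemma cpwl_clamped_states:
  fixes f :: "real \<Rightarrow> real" and p :: "nat \<Rightarrow> real"
  assumes "p 0 = a"
    and incr: "\<forall>i<P. p i < p (Suc i)"
    and pieces: "\<forall>i<P. \<exists>m c. \<forall>y\<in>{p i..p (Suc i)}. f y = m * y + c"
    and nonneg: "\<forall>y\<in>{a..b}. 0 \<le> f y + B"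
    and "k \<le> P"
  shows "a \<le> p k \<and>
    (\<exists>ts. \<forall>x\<in>{a..b}. fold hidden_layer ts (clamped_state f B a x) = clamped_state f B (p k) x)"
  using \<open>k \<le> P\<close>
proof (induction k)
  case 0
  have "\<forall>x\<in>{a..b}. fold hidden_layer [] (clamped_state f B a x) = clamped_state f B (p 0) x"
    using \<open>p 0 = a\<close> by simp
  then show ?case using \<open>p 0 = a\<close> by blast
next
  case (Suc k)
  then obtain ts where "a \<le> p k"
    and ts: "\<forall>x\<in>{a..b}. fold hidden_layer ts (clamped_state f B a x) = clamped_state f B (p k) x"
    by auto
  obtain m c where affine: "\<forall>y\<in>{p k..p (Suc k)}. f y = m * y + c"
    using pieces Suc.prems by (meson Suc_le_lessD)
  have step: "p k \<le> p (Suc k)" using incr Suc.prems by (simp add: Suc_le_eq less_imp_le)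
  define K where "K = \<bar>m\<bar> * (b - a)"
  define ts' where "ts' = ts @ [layer2 1 0 m 1 (p k - p (Suc k)) K, layer2 1 0 (- m) 1 0 (- K)]"
  have "fold hidden_layer ts' (clamped_state f B a x) = clamped_state f B (p (Suc k)) x"
    if x: "x \<in> {a..b}" for x
  proof -
    have "0 \<le> f (min x (p k)) + B" "0 \<le> f (min x (p (Suc k))) + B"
      using nonneg x \<open>a \<le> p k\<close> step by auto
    moreover have "\<bar>m\<bar> * max 0 (x - p k) \<le> K"
      unfolding K_def using x \<open>a \<le> p k\<close> by (intro mult_left_mono) auto
    ultimately show ?thesis
      using clamped_state_step[OF affine step] ts x by (simp add: ts'_def)
  qed
  then show ?case using \<open>a \<le> p k\<close> step by fastforce
qed

theorem lemma10:
  fixes a b :: real and fstar :: "real \<Rightarrow> real" and P :: nat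
  assumes "a \<le> b"
    and "cpwl_pieces fstar a b P"
  shows "\<exists>ts ds. relu_net ts ds \<and> net_width ds = 2 \<and>
           (\<forall>x\<in>{a..b}. net_fun ts ds x = fstar x)"
proof -
  obtain p :: "nat \<Rightarrow> real" where "p 0 = a" "p P = b"
    and incr: "\<forall>i<P. p i < p (Suc i)"
    and pieces: "\<forall>i<P. \<exists>m c. \<forall>x\<in>{p i..p (Suc i)}. fstar x = m * x + c"
    using assms(2) unfolding cpwl_pieces_def by blast
  obtain y0 where "\<forall>y\<in>{a..b}. fstar y0 \<le> fstar y"
    using continuous_attains_inf[of "{a..b}" fstar] assms unfolding cpwl_pieces_def by auto
  define B where "B = - fstar y0"
  have nonneg: "\<forall>y\<in>{a..b}. 0 \<le> fstar y + B"
    using \<open>\<forall>y\<in>{a..b}. fstar y0 \<le> fstar y\<close> by (simp add: B_def)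
  obtain ts where ts: "\<forall>x\<in>{a..b}.
      fold hidden_layer ts (clamped_state fstar B a x) = clamped_state fstar B b x"
    using cpwl_clamped_states[OF \<open>p 0 = a\<close> incr pieces nonneg order_refl] \<open>p P = b\<close> by blast
  define t1 where "t1 = layer2 1 0 0 0 (- a) (fstar a + B)"
  define tL where "tL = layer2 0 1 0 0 (- B) 0"
  have "net_fun (t1 # ts @ [tL]) (1 # replicate (Suc (length ts)) 2 @ [1]) x = fstar x"
    if x: "x \<in> {a..b}" for x
  proof -
    have "net_fun (t1 # ts @ [tL]) (1 # replicate (Suc (length ts)) 2 @ [1]) x =
        affine_map tL 2 (fold hidden_layer ts (relu_vec (affine_map t1 1 (\<lambda>_. x)))) 0"
      by (rule net_fun_width2)
    also have "relu_vec (affine_map t1 1 (\<lambda>_. x)) = clamped_state fstar B a x"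
      unfolding t1_def using x nonneg \<open>a \<le> b\<close> by (intro clamped_state_input) auto
    also have "fold hidden_layer ts (clamped_state fstar B a x) = clamped_state fstar B b x"
      using ts x by blast
    also have "affine_map tL 2 (clamped_state fstar B b x) 0 = fstar x"
      unfolding tL_def using x by (simp add: clamped_state_output)
    finally show ?thesis .
  qed
  then show ?thesis
    using relu_net_width2 net_width_width2 by blast
qed

end
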